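(* Let $\{x^k\}$ be generated by the ABP algorithm described in the context and assume (A1)–(A6), (A7'), (A8): (A1) $\mathcal F$ is continuously differentiable; (A2) $C$, $Q$ nonempty closed convex, $z_i^*>-\infty$ for each $i$; (A3) each $f_i$ convex; (A4) $\Omega\ne\emptyset$; (A5) $\lambda_k>0$, $\sum\lambda_k=\infty$, $\sum\lambda_k^2<\infty$; (A6) $0<\underline\alpha\le\alpha_k\le\bar\alpha$, $0<\underline\beta\le\beta_k\le\bar\beta$, $0<\underline\gamma\le\gamma_k\le\bar\gamma$ for all $k$; (A7') $\sigma:=\varphi^*-\varphi_{\mathrm{lb}}\le\varepsilon_0$ for a known constant $\varepsilon_0\ge0$; (A8) $\sup_k\|x^k\|\le B<\infty$. Let $\bar M<\infty$ be a uniform bound with $\|d^k\|\le\bar M$ for all $k$ (which exists under these assumptions), $\bar\eta:=\max(\mu,\bar M)$ and $C_*:=\bar\alpha\bar\eta/\mu$. Then there exist a subsequence $\{k_j\}$ and a constant $\ell_*\in[0,C_*\varepsilon_0]$ such that $\Phi_{k_j}\to\ell_*$ and $$H_{k_j}\le\frac{\Phi_{k_j}}{\underline\beta}\xrightarrow{j\to\infty}\frac{\ell_*}{\underline\beta}\le\frac{C_*\varepsilon_0}{\underline\beta},\quad G_{k_j}\le\frac{\Phi_{k_j}}{\underline\gamma}\xrightarrow{j\to\infty}\frac{\ell_*}{\underline\gamma}\le\frac{C_*\varepsilon_0}{\underline\gamma},\quad \Delta^+_{k_j}\le\frac{\Phi_{k_j}}{\underline\alpha}\xrightarrow{j\to\infty}\frac{\ell_*}{\underline\alpha}\le\frac{C_*\varepsilon_0}{\underline\alpha}.$$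 In particular, when $\varepsilon_0=0$, $\ell_*=0$ and $H_{k_j}\to0$, $G_{k_j}\to0$, $\Delta^+_{k_j}\to0$.
   Context: Let $n,m\ge1$, $\mathcal F=(f_1,\dots,f_m)\colon\mathbb R^n\to\mathbb R^m$, $C\subset\mathbb R^n$, $Q\subset\mathbb R^m$, $Q^+:=Q-\mathbb R^m_+=\{y-u:y\in Q,u\in\mathbb R^m_+\}$; $P_S$ is Euclidean projection onto a nonempty closed convex set $S$. Let $z_i^*:=\inf_{x\in C}f_i(x)$, fix $r$ with $r_i>0$, $\sum r_i=1$. Define $\varphi(x):=\max_ir_i(f_i(x)-z_i^* )$, $H(x):=\tfrac12\mathrm{dist}^2(x,C)$, $G(x):=\tfrac12\mathrm{dist}^2(\mathcal F(x),Q^+)$, $\mathcal S:=\{x:H(x)=0,G(x)=0\}$, $\varphi^*:=\inf_{\mathcal S}\varphi$, $\Omega:=\{x\in\mathcal S:\varphi(x)=\varphi^*\}$, $\varphi_{\mathrm{lb}}:=\inf_C\varphi$. ABP algorithm: given $x^0$, $\mu>0$, positive sequences $\{\alpha_k\},\{\beta_k\},\{\gamma_k\},\{\lambda_k\}$: $p^k:=P_{Q^+}(\mathcal F(x^k))$, $\rho^k:=\mathcal F(x^k)-p^k$, $z^k:=x^k-P_C(x^k)$, $v^k:=J_{\mathcal F}(x^k)^T\rho^k$, $w^k:=r_{i^*}\nabla f_{i^*}(x^k)$ with arbitrary $i^*\in\arg\max_ir_i(f_i(x^k)-z_i^* )$, $\Delta_k:=\varphi(x^k)-\varphi_{\mathrm{lb}}$,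 $d^k:=\alpha_k\mathbf 1_{\{\Delta_k\ge0\}}w^k+\beta_kz^k+\gamma_kv^k$, $\eta_k:=\max(\mu,\|d^k\|)$, $x^{k+1}:=x^k-(\lambda_k/\eta_k)d^k$. Notation: $H_k:=H(x^k)$, $G_k:=G(x^k)$, $\Delta_k^+:=\max(\Delta_k,0)$, $\Phi_k:=\alpha_k\Delta_k^++\beta_kH_k+\gamma_kG_k$. *)

theory Defs
  imports "HOL-Analysis.Analysis"
begin

definition Qplus :: "(real^'m) set \<Rightarrow> (real^'m) set" where
  "Qplus Q = {y - u | y u. y \<in> Q \<and> (\<forall>i. 0 \<le> u $ i)}"

definition zstar :: "(real^'n \<Rightarrow> real^'m) \<Rightarrow> (real^'n) set \<Rightarrow> 'm \<Rightarrow> real" where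
  "zstar F C i = Inf ((\<lambda>x. F x $ i) ` C)"

definition phi :: "(real^'n \<Rightarrow> real^'m) \<Rightarrow> (real^'n) set \<Rightarrow> ('m::finite \<Rightarrow> real) \<Rightarrow> real^'n \<Rightarrow> real" where
  "phi F C r x = Max (range (\<lambda>i. r i * (F x $ i - zstar F C i)))"

definition Hfun :: "(real^'n) set \<Rightarrow> real^'n \<Rightarrow> real" where
  "Hfun C x = (infdist x C)^2 / 2"

definition Gfun :: "(real^'n \<Rightarrow> real^'m) \<Rightarrow> (real^'m) set \<Rightarrow> real^'n \<Rightarrow> real" where
  "Gfun F Q x = (infdist (F x) (Qplus Q))^2 / 2"

definition feas :: "(real^'n \<Rightarrow> real^'m) \<Rightarrow> (real^'n) set \<Rightarrow> (real^'m) set \<Rightarrow> (real^'n) set" where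
  "feas F C Q = {x. Hfun C x = 0 \<and> Gfun F Q x = 0}"

definition phistar :: "(real^'n \<Rightarrow> real^'m) \<Rightarrow> (real^'n) set \<Rightarrow> (real^'m) set \<Rightarrow> ('m::finite \<Rightarrow> real) \<Rightarrow> real" where
  "phistar F C Q r = Inf (phi F C r ` feas F C Q)"

definition Omega :: "(real^'n \<Rightarrow> real^'m) \<Rightarrow> (real^'n) set \<Rightarrow> (real^'m) set \<Rightarrow> ('m::finite \<Rightarrow> real) \<Rightarrow> (real^'n) set" where
  "Omega F C Q r = {x \<in> feas F C Q. phi F C r x = phistar F C Q r}"

definition philb :: "(real^'n \<Rightarrow> real^'m) \<Rightarrow> (real^'n) set \<Rightarrow> ('m::finite \<Rightarrow> real) \<Rightarrow> real" where
  "philb F C r = Inf (phi F C r ` C)"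

end

theory Submission
  imports Defs
begin

(* For every z in Omega the ABP direction is a quasi-subgradient of the merit function:
     Phi_k - alpha_hi eps0 <= <d^k, x^k - z>.
   The H-term comes from the projection inequality for C, the G-term from the projection inequality
   for the closure of Q^+ combined with the gradient inequality of the convex f_i (legitimate because
   the residual F(x) - P(F(x)) is componentwise nonnegative), and the Delta-term from the gradient
   inequality of the active f_i, paying the gap phi* - phi_lb <= eps0 since phi(z) = phi*.
   The normalised step then gives
     |x^{k+1} - z|^2 <= |x^k - z|^2 - 2 (lambda_k / eta_k) (Phi_k - alpha_hi eps0) + lambda_k^2
   with eta_k <= eta_bar, so Phi_k cannot stay above alpha_hi eps0 + eps without making sum lambda_k
   finite. Hence liminf Phi_k <= alpha_hi eps0 <= C_* eps0, and a subsequence realising the liminf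
   gives ell_*. *)

lemma convex_on_diff_le_derivative:
  fixes f :: "'a::real_normed_vector \<Rightarrow> real"
  assumes convex: "convex_on UNIV f" and deriv: "(f has_derivative f') (at x)"
  shows "f x - f y \<le> f' (x - y)"
proof -
  define h where "h = y - x"
  let ?g = "\<lambda>t::real. f (x + t *\<^sub>R h)"
  have "convex_on UNIV ?g"
  proof (rule convex_onI)
    fix t a b :: real assume "0 < t" "t < 1"
    have "x + ((1 - t) *\<^sub>R a + t *\<^sub>R b) *\<^sub>R h = (1 - t) *\<^sub>R (x + a *\<^sub>R h) + t *\<^sub>R (x + b *\<^sub>R h)"
      by (simp add: algebra_simps)
    then show "?g ((1 - t) *\<^sub>R a + t *\<^sub>R b) \<le> (1 - t) * ?g a + t * ?g b"
      using convex_onD[OF convex, of t "x + a *\<^sub>R h" "x + b *\<^sub>R h"] \<open>0 < t\<close> \<open>t < 1\<close> by simp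
  qed simp
  have "linear f'" using deriv by (rule has_derivative_linear)
  have "((\<lambda>t::real. x + t *\<^sub>R h) has_derivative (\<lambda>t. t *\<^sub>R h)) (at 0)"
    by (auto intro!: derivative_eq_intros)
  from diff_chain_at[OF this] deriv
  have "(?g has_derivative (\<lambda>t. f' (t *\<^sub>R h))) (at 0)"
    by (simp add: o_def)
  then have "(?g has_real_derivative f' h) (at 0)"
    using \<open>linear f'\<close> by (simp add: has_field_derivative_def linear_scale mult.commute[of _ "f' h"])
  from convex_on_imp_above_tangent[OF \<open>convex_on UNIV ?g\<close> _ _ _ this[unfolded at_within_open[OF _ open_UNIV, symmetric]], of 1]
  have "f' h \<le> f y - f x" by (simp add: h_def)
  moreover have "f' (x - y) = - f' h"
    using \<open>linear f'\<close> unfolding h_def by (metis linear_neg minus_diff_eq)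
  ultimately show ?thesis by simp
qed

lemma infdist_eq_dist_closest_point_closure:
  fixes S :: "'a::{real_inner,heine_borel} set"
  assumes "S \<noteq> {}"
  shows "infdist a S = dist a (closest_point (closure S) a)"
proof (rule antisym)
  let ?p = "closest_point (closure S) a"
  have "?p \<in> closure S"
    using assms by (intro closest_point_in_set) auto
  then have "infdist ?p S = 0"
    using in_closure_iff_infdist_zero[OF assms] by simp
  then show "infdist a S \<le> dist a ?p"
    using infdist_triangle[of a S ?p] by simp
  show "dist a ?p \<le> infdist a S"
    unfolding infdist_notempty[OF assms]
    by (rule cINF_greatest[OF assms]) (meson closest_point_le closed_closure closure_subset subsetD)
qed

lemma norm_closest_point_residual_le:
  fixes S :: "'a::euclidean_space set"
  assumes "convex S" "closed S" "y \<in> S"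
  shows "(norm (a - closest_point S a))\<^sup>2 \<le> inner (a - closest_point S a) (a - y)"
proof -
  let ?p = "closest_point S a"
  have "inner (a - ?p) (y - ?p) \<le> 0"
    using closest_point_dot[OF assms] .
  moreover have "a - y = (a - ?p) - (y - ?p)" by simp
  ultimately show ?thesis
    by (simp only: power2_norm_eq_inner inner_diff_right)
qed

lemma normalized_step_dist_le:
  fixes x d z :: "'a::real_inner"
  assumes "0 < \<mu>" "0 \<le> lam" "v \<le> inner d (x - z)"
  shows "(norm (x - (lam / max \<mu> (norm d)) *\<^sub>R d - z))\<^sup>2
           \<le> (norm (x - z))\<^sup>2 - 2 * (lam / max \<mu> (norm d)) * v + lam\<^sup>2"
proof -
  define t where "t = lam / max \<mu> (norm d)"
  have "0 \<le> t" unfolding t_def using assms(1,2) by simp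
  have "t * norm d \<le> lam"
    unfolding t_def using assms(1,2) by (simp add: divide_le_eq mult_left_mono mult.commute)
  then have "(t * norm d)\<^sup>2 \<le> lam\<^sup>2"
    using \<open>0 \<le> t\<close> by (simp add: power_mono)
  moreover have "(norm ((x - z) - t *\<^sub>R d))\<^sup>2 = (norm (x - z))\<^sup>2 - 2 * t * inner d (x - z) + (t * norm d)\<^sup>2"
    by (simp only: power_mult_distrib power2_norm_eq_inner)
      (simp add: inner_commute algebra_simps power2_eq_square)
  moreover have "t * v \<le> t * inner d (x - z)"
    using assms(3) \<open>0 \<le> t\<close> by (rule mult_left_mono)
  ultimately show ?thesis
    unfolding t_def[symmetric] by (simp add: algebra_simps)
qed

lemma frequently_less_of_quasi_descent:
  fixes D lam t u :: "nat \<Rightarrow> real"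
  assumes D_nonneg: "\<And>k. 0 \<le> D k"
    and lam_nonneg: "\<And>k. 0 \<le> lam k"
    and not_summable: "\<not> summable lam" and summable_sq: "summable (\<lambda>k. (lam k)\<^sup>2)"
    and eta: "0 < \<eta>" and t_ge: "\<And>k. lam k / \<eta> \<le> t k"
    and descent: "\<And>k. D (Suc k) \<le> D k - 2 * t k * (u k - c) + (lam k)\<^sup>2"
    and "0 < \<epsilon>"
  shows "\<exists>\<^sub>F k in sequentially. u k < c + \<epsilon>"
proof (rule ccontr)
  assume "\<not> ?thesis"
  then obtain N where big: "\<And>k. k \<ge> N \<Longrightarrow> c + \<epsilon> \<le> u k"
    by (auto simp: not_frequently eventually_sequentially not_less)
  let ?w = "\<lambda>j. 2 * \<epsilon> / \<eta> * lam (j + N)"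
  have step: "?w j \<le> (D (j + N) - D (Suc (j + N))) + (lam (j + N))\<^sup>2" for j
  proof -
    have "0 \<le> lam (j + N) / \<eta>" using lam_nonneg eta by simp
    then have "lam (j + N) / \<eta> * \<epsilon> \<le> t (j + N) * (u (j + N) - c)"
      using big[of "j + N"] t_ge[of "j + N"] \<open>0 < \<epsilon>\<close>
      by (intro mult_mono) auto
    moreover have "?w j = 2 * (lam (j + N) / \<eta> * \<epsilon>)" by simp
    ultimately show ?thesis using descent[of "j + N"] by linarith
  qed
  have "(\<Sum>j<n. ?w j) \<le> D N + (\<Sum>j. (lam (j + N))\<^sup>2)" for n
  proof -
    have "(\<Sum>j<n. ?w j) \<le> (\<Sum>j<n. D (j + N) - D (Suc (j + N))) + (\<Sum>j<n. (lam (j + N))\<^sup>2)"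
      unfolding sum.distrib[symmetric] by (rule sum_mono) (rule step)
    also have "(\<Sum>j<n. D (j + N) - D (Suc (j + N))) = D N - D (n + N)"
      using sum_lessThan_telescope'[of "\<lambda>j. D (j + N)" n] by simp
    also have "(\<Sum>j<n. (lam (j + N))\<^sup>2) \<le> (\<Sum>j. (lam (j + N))\<^sup>2)"
      using summable_sq summable_iff_shift[of "\<lambda>k. (lam k)\<^sup>2" N] by (intro sum_le_suminf) auto
    finally show ?thesis using D_nonneg[of "n + N"] by linarith
  qed
  then have "summable ?w"
    using lam_nonneg eta \<open>0 < \<epsilon>\<close> by (intro summableI_nonneg_bounded) auto
  then have "summable (\<lambda>j. lam (j + N))"
    using eta \<open>0 < \<epsilon>\<close> by simp
  then show False using not_summable by simp
qed

lemma frequently_less_of_normalized_steps: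
  fixes x d :: "nat \<Rightarrow> 'a::real_inner" and lam u :: "nat \<Rightarrow> real"
  assumes mu: "0 < \<mu>" and lam_pos: "\<forall>k. 0 < lam k"
    and "\<not> summable lam" "summable (\<lambda>k. (lam k)\<^sup>2)"
    and d_bound: "\<forall>k. norm (d k) \<le> M"
    and step: "\<forall>k. x (Suc k) = x k - (lam k / max \<mu> (norm (d k))) *\<^sub>R d k"
    and quasi: "\<forall>k. u k - c \<le> inner (d k) (x k - z)"
    and "0 < \<epsilon>"
  shows "\<exists>\<^sub>F k in sequentially. u k < c + \<epsilon>"
proof (rule frequently_less_of_quasi_descent[where D = "\<lambda>k. (norm (x k - z))\<^sup>2"
      and t = "\<lambda>k. lam k / max \<mu> (norm (d k))" and \<eta> = "max \<mu> M"])
  show "(norm (x (Suc k) - z))\<^sup>2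
      \<le> (norm (x k - z))\<^sup>2 - 2 * (lam k / max \<mu> (norm (d k))) * (u k - c) + (lam k)\<^sup>2" for k
    using normalized_step_dist_le[OF mu less_imp_le[OF lam_pos[rule_format]] quasi[rule_format]]
    unfolding step[rule_format] .
  show "lam k / max \<mu> M \<le> lam k / max \<mu> (norm (d k))" for k
    using lam_pos mu d_bound[rule_format, of k] by (intro divide_left_mono) (auto simp: less_imp_le)
qed (use assms in \<open>auto simp: less_imp_le\<close>)

lemma subseq_tendsto_le_of_frequently_less:
  fixes u :: "nat \<Rightarrow> real"
  assumes nonneg: "\<And>k. 0 \<le> u k"
    and frequently_less: "\<And>\<epsilon>. 0 < \<epsilon> \<Longrightarrow> \<exists>\<^sub>F k in sequentially. u k < c + \<epsilon>"
  shows "\<exists>kj l. strict_mono kj \<and> 0 \<le> l \<and> l \<le> c \<and> (\<lambda>j. u (kj j)) \<longlonglongrightarrow> l"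
proof -
  define L where "L = liminf (\<lambda>k. ereal (u k))"
  have "L \<le> ereal c"
  proof (rule ccontr)
    assume "\<not> L \<le> ereal c"
    then obtain e where e: "ereal c < ereal e" "ereal e < L"
      using ereal_dense2 by (metis not_le)
    then have "\<forall>\<^sub>F k in sequentially. \<not> u k < e"
      using less_LiminfD[of "ereal e" sequentially "\<lambda>k. ereal (u k)"] unfolding L_def
      by (auto elim: eventually_mono)
    moreover have "\<exists>\<^sub>F k in sequentially. u k < e"
      using frequently_less[of "e - c"] e(1) by simp
    ultimately show False by (simp add: not_frequently[symmetric])
  qed
  moreover have "0 \<le> L"
    unfolding L_def using nonneg by (intro Liminf_bounded) auto
  ultimately obtain l where l: "L = ereal l" "0 \<le> l" "l \<le> c"
    by (cases L) auto
  obtain kj where "strict_mono kj" "((\<lambda>k. ereal (u k)) \<circ> kj) \<longlonglongrightarrow> L"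
    using liminf_subseq_lim unfolding L_def by blast
  then show ?thesis using l by (auto simp: o_def)
qed

lemma le_divide_of_weighted_le:
  fixes u P :: real
  assumes "0 < lo" "lo \<le> w" "0 \<le> u" "w * u \<le> P"
  shows "u \<le> P / lo"
proof -
  have "lo * u \<le> w * u" using assms(2,3) by (rule mult_right_mono)
  then show ?thesis using assms(1,4) by (simp add: pos_le_divide_eq mult.commute)
qed

lemma weighted_sum_term_bounds:
  fixes a b g u v w :: real
  assumes "0 < alo" "alo \<le> a" "0 < blo" "blo \<le> b" "0 < glo" "glo \<le> g"
    and "0 \<le> u" "0 \<le> v" "0 \<le> w"
  shows "0 \<le> a * u + b * v + g * w"
    and "u \<le> (a * u + b * v + g * w) / alo"
    and "v \<le> (a * u + b * v + g * w) / blo"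
    and "w \<le> (a * u + b * v + g * w) / glo"
proof -
  have "0 \<le> a * u" "0 \<le> b * v" "0 \<le> g * w"
    using assms by (meson mult_nonneg_nonneg order.trans less_imp_le)+
  then show "0 \<le> a * u + b * v + g * w"
    and "u \<le> (a * u + b * v + g * w) / alo"
    and "v \<le> (a * u + b * v + g * w) / blo"
    and "w \<le> (a * u + b * v + g * w) / glo"
    using assms by (auto intro!: le_divide_of_weighted_le)
qed

lemma tendsto_zero_of_le_divide:
  fixes u P :: "nat \<Rightarrow> real"
  assumes "0 < lo" "\<And>j. 0 \<le> u j" "\<And>j. u j \<le> P j / lo" "P \<longlonglongrightarrow> 0"
  shows "u \<longlonglongrightarrow> 0"
proof (rule tendsto_sandwich[OF _ _ tendsto_const])
  show "(\<lambda>j. P j / lo) \<longlonglongrightarrow> 0" using tendsto_divide_zero[OF assms(4)] .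
qed (use assms(2,3) in auto)

lemma convex_Qplus:
  fixes Q :: "(real^'m) set"
  assumes "convex Q"
  shows "convex (Qplus Q)"
  using assms
  unfolding convex_def Qplus_def
proof clarify
  fix y1 u1 y2 u2 :: "real^'m" and s t :: real
  assume "\<forall>x\<in>Q. \<forall>y\<in>Q. \<forall>u\<ge>0. \<forall>v\<ge>0. u + v = 1 \<longrightarrow> u *\<^sub>R x + v *\<^sub>R y \<in> Q"
    and "y1 \<in> Q" "\<forall>i. 0 \<le> u1 $ i" "y2 \<in> Q" "\<forall>i. 0 \<le> u2 $ i" "0 \<le> s" "0 \<le> t" "s + t = 1"
  then show "\<exists>y u. s *\<^sub>R (y1 - u1) + t *\<^sub>R (y2 - u2) = y - u \<and> y \<in> Q \<and> (\<forall>i. 0 \<le> u $ i)"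
    by (intro exI[of _ "s *\<^sub>R y1 + t *\<^sub>R y2"] exI[of _ "s *\<^sub>R u1 + t *\<^sub>R u2"])
      (auto simp: algebra_simps)
qed

lemma Qplus_nonempty:
  fixes Q :: "(real^'m) set"
  assumes "Q \<noteq> {}"
  shows "Qplus Q \<noteq> {}"
proof -
  obtain q where "q \<in> Q" using assms by blast
  then have "q - 0 \<in> Qplus Q" unfolding Qplus_def by fastforce
  then show ?thesis by blast
qed

lemma Qplus_diff_nonneg: "y \<in> Qplus Q \<Longrightarrow> \<forall>i. 0 \<le> a $ i \<Longrightarrow> y - a \<in> Qplus Q"
  unfolding Qplus_def by (force intro: exI[of _ "_ + a"] simp: algebra_simps)

lemma closure_Qplus_diff_nonneg:
  assumes "y \<in> closure (Qplus Q)" "\<forall>i. 0 \<le> a $ i"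
  shows "y - a \<in> closure (Qplus Q)"
proof -
  have "(\<lambda>z. z - a) ` closure (Qplus Q) \<subseteq> closure (Qplus Q)"
    using Qplus_diff_nonneg[OF _ assms(2)] closure_subset
    by (intro image_closure_subset continuous_intros) auto
  then show ?thesis using assms(1) by auto
qed

lemma closest_point_closure_Qplus_residual_nonneg:
  assumes "Q \<noteq> {}" "convex Q"
  shows "0 \<le> (y - closest_point (closure (Qplus Q)) y) $ j"
proof -
  let ?K = "closure (Qplus Q)"
  have "?K \<noteq> {}" using Qplus_nonempty[OF assms(1)] by simp
  then have "closest_point ?K y \<in> ?K" by (intro closest_point_in_set) auto
  then have "closest_point ?K y - axis j 1 \<in> ?K"
    using closure_Qplus_diff_nonneg[of _ Q "axis j 1"] by (simp add: axis_def)
  from closest_point_dot[OF convex_closure[OF convex_Qplus[OF assms(2)]] closed_closure this, of y]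
  have "inner (y - closest_point ?K y) (- axis j 1) \<le> 0" by simp
  then show ?thesis by (simp add: inner_axis)
qed

lemma mem_feas_iff:
  assumes "closed C" "C \<noteq> {}" "Q \<noteq> {}"
  shows "z \<in> feas F C Q \<longleftrightarrow> z \<in> C \<and> F z \<in> closure (Qplus Q)"
  using in_closed_iff_infdist_zero[OF assms(1,2)] in_closure_iff_infdist_zero[OF Qplus_nonempty[OF assms(3)]]
  unfolding feas_def Hfun_def Gfun_def by simp

lemma Hfun_le_inner:
  assumes "convex C" "closed C" "z \<in> C"
  shows "2 * Hfun C x \<le> inner (x - closest_point C x) (x - z)"
proof -
  have "C \<noteq> {}" using \<open>z \<in> C\<close> by blast
  then have "2 * Hfun C x = (norm (x - closest_point C x))\<^sup>2"
    using infdist_eq_dist_closest_point_closure[of C x] \<open>closed C\<close>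
    by (simp add: Hfun_def dist_norm)
  then show ?thesis using norm_closest_point_residual_le[OF assms] by simp
qed

lemma convex_component_diff_le_jacobian:
  fixes F :: "real^'n \<Rightarrow> real^'m"
  assumes "convex_on UNIV (\<lambda>y. F y $ j)" "(F has_derivative (\<lambda>h. A *v h)) (at x)"
  shows "F x $ j - F z $ j \<le> (A *v (x - z)) $ j"
  using convex_on_diff_le_derivative[OF assms(1)
      bounded_linear.has_derivative[OF bounded_linear_vec_nth assms(2)]] .

lemma Gfun_le_inner:
  fixes F :: "real^'n \<Rightarrow> real^'m"
  assumes "Q \<noteq> {}" "convex Q" "F z \<in> closure (Qplus Q)"
    and "\<forall>j. convex_on UNIV (\<lambda>y. F y $ j)" "(F has_derivative (\<lambda>h. A *v h)) (at x)"
  shows "2 * Gfun F Q x \<le> inner (transpose A *v (F x - closest_point (closure (Qplus Q)) (F x))) (x - z)"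
proof -
  define \<rho> where "\<rho> = F x - closest_point (closure (Qplus Q)) (F x)"
  have "2 * Gfun F Q x = (norm \<rho>)\<^sup>2"
    using infdist_eq_dist_closest_point_closure[OF Qplus_nonempty[OF assms(1)]]
    by (simp add: Gfun_def \<rho>_def dist_norm)
  also have "\<dots> \<le> inner \<rho> (F x - F z)"
    unfolding \<rho>_def
    by (rule norm_closest_point_residual_le[OF convex_closure[OF convex_Qplus[OF assms(2)]]
          closed_closure assms(3)])
  also have "\<dots> = (\<Sum>j\<in>UNIV. \<rho> $ j * (F x $ j - F z $ j))"
    by (simp add: inner_vec_def)
  also have "\<dots> \<le> (\<Sum>j\<in>UNIV. \<rho> $ j * (A *v (x - z)) $ j)"
    using closest_point_closure_Qplus_residual_nonneg[OF assms(1,2)]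
      convex_component_diff_le_jacobian[OF spec[OF assms(4)] assms(5)]
    by (intro sum_mono mult_left_mono) (auto simp: \<rho>_def)
  also have "\<dots> = inner \<rho> (A *v (x - z))"
    by (simp add: inner_vec_def)
  also have "\<dots> = inner (transpose A *v \<rho>) (x - z)"
    by (simp add: dot_lmul_matrix)
  finally show ?thesis unfolding \<rho>_def .
qed

lemma phi_diff_le_inner:
  fixes F :: "real^'n \<Rightarrow> real^'m::finite"
  assumes argmax: "\<forall>j. r j * (F x $ j - zstar F C j) \<le> r i * (F x $ i - zstar F C i)"
    and "0 \<le> r i" "convex_on UNIV (\<lambda>y. F y $ i)" "(F has_derivative (\<lambda>h. A *v h)) (at x)"
  shows "phi F C r x - phi F C r z \<le> inner (r i *\<^sub>R (A $ i)) (x - z)"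
proof -
  have "phi F C r x = r i * (F x $ i - zstar F C i)"
    unfolding phi_def by (rule Max_eqI) (use argmax in auto)
  moreover have "r i * (F z $ i - zstar F C i) \<le> phi F C r z"
    unfolding phi_def by (rule Max_ge) auto
  moreover have "r i * (F x $ i - F z $ i) \<le> r i * (A *v (x - z)) $ i"
    using convex_component_diff_le_jacobian[OF assms(3,4)] \<open>0 \<le> r i\<close> by (rule mult_left_mono)
  moreover have "inner (r i *\<^sub>R (A $ i)) (x - z) = r i * (A *v (x - z)) $ i"
    by (simp add: inner_vec_def matrix_vector_mult_def sum_distrib_left mult.assoc)
  ultimately show ?thesis by (simp only: right_diff_distrib)
qed

lemma abp_direction_inner_ge:
  fixes F :: "real^'n \<Rightarrow> real^'m::finite" and A :: "real^'n^'m"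
  assumes deriv: "(F has_derivative (\<lambda>h. A *v h)) (at x)"
    and convex: "\<forall>j. convex_on UNIV (\<lambda>y. F y $ j)"
    and C: "C \<noteq> {}" "closed C" "convex C" and Q: "Q \<noteq> {}" "convex Q"
    and z: "z \<in> Omega F C Q r"
    and gap: "0 \<le> \<epsilon>0" "phistar F C Q r - philb F C r \<le> \<epsilon>0"
    and weights: "0 \<le> a" "a \<le> ahi" "0 \<le> b" "0 \<le> g"
    and argmax: "\<forall>j. r j * (F x $ j - zstar F C j) \<le> r i * (F x $ i - zstar F C i)" "0 \<le> r i"
    and Delta: "\<Delta> = phi F C r x - philb F C r"
    and d: "d = (if \<Delta> \<ge> 0 then a else 0) *\<^sub>R (r i *\<^sub>R (A $ i))
              + b *\<^sub>R (x - closest_point C x)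
              + g *\<^sub>R (transpose A *v (F x - closest_point (closure (Qplus Q)) (F x)))"
  shows "a * max \<Delta> 0 + b * Hfun C x + g * Gfun F Q x - ahi * \<epsilon>0 \<le> inner d (x - z)"
proof -
  have zC: "z \<in> C" and zQ: "F z \<in> closure (Qplus Q)"
    using z mem_feas_iff[OF C(2,1) Q(1)] by (auto simp: Omega_def)
  have "phi F C r z = phistar F C Q r" using z by (simp add: Omega_def)
  then have "\<Delta> - \<epsilon>0 \<le> inner (r i *\<^sub>R (A $ i)) (x - z)"
    using phi_diff_le_inner[OF argmax spec[OF convex] deriv, of z] Delta gap by simp
  then have a_part: "a * max \<Delta> 0 - ahi * \<epsilon>0 \<le> (if \<Delta> \<ge> 0 then a else 0) * inner (r i *\<^sub>R (A $ i)) (x - z)"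
  proof (cases "\<Delta> \<ge> 0")
    case True
    have "a * \<epsilon>0 \<le> ahi * \<epsilon>0" using weights(2) gap(1) by (rule mult_right_mono)
    with True show ?thesis
      using mult_left_mono[OF \<open>\<Delta> - \<epsilon>0 \<le> _\<close> weights(1)] by (simp add: right_diff_distrib)
  qed (use weights gap in simp)
  have "0 \<le> Hfun C x" "0 \<le> Gfun F Q x" by (simp_all add: Hfun_def Gfun_def)
  then have "b * Hfun C x \<le> b * inner (x - closest_point C x) (x - z)"
    and "g * Gfun F Q x \<le> g * inner (transpose A *v (F x - closest_point (closure (Qplus Q)) (F x))) (x - z)"
    using Hfun_le_inner[OF C(3,2) zC, of x] Gfun_le_inner[OF Q zQ convex deriv] weights
    by (auto intro!: mult_left_mono)
  then show ?thesis
    using a_part unfolding d by (simp add: inner_add_left)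
qed

theorem proposition7:
  fixes F :: "real^'n \<Rightarrow> real^'m"
    and J :: "real^'n \<Rightarrow> real^'n^'m"
    and C :: "(real^'n) set" and Q :: "(real^'m) set"
    and r :: "'m \<Rightarrow> real"
    and x :: "nat \<Rightarrow> real^'n" and istar :: "nat \<Rightarrow> 'm"
    and d :: "nat \<Rightarrow> real^'n"
    and \<alpha> \<beta> \<gamma> lam :: "nat \<Rightarrow> real"
    and \<mu> \<alpha>lo \<alpha>hi \<beta>lo \<beta>hi \<gamma>lo \<gamma>hi \<epsilon>0 B Mbar :: real
    and Delta Phi :: "nat \<Rightarrow> real"
  assumes r_pos: "\<forall>i. r i > 0" and r_sum: "(\<Sum>i\<in>UNIV. r i) = 1"
    and mu_pos: "\<mu> > 0"
    \<comment> \<open>(A1) F continuously differentiable, with Jacobian J\<close>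
    and A1_deriv: "\<forall>y. (F has_derivative (\<lambda>h. J y *v h)) (at y)"
    and A1_cont: "continuous_on UNIV J"
    \<comment> \<open>(A2)\<close>
    and A2_C: "C \<noteq> {}" "closed C" "convex C"
    and A2_Q: "Q \<noteq> {}" "closed Q" "convex Q"
    and A2_z: "\<forall>i. bdd_below ((\<lambda>y. F y $ i) ` C)"
    \<comment> \<open>(A3)\<close>
    and A3: "\<forall>i. convex_on UNIV (\<lambda>y. F y $ i)"
    \<comment> \<open>(A4)\<close>
    and A4: "Omega F C Q r \<noteq> {}"
    \<comment> \<open>(A5)\<close>
    and A5: "\<forall>k. lam k > 0" "\<not> summable lam" "summable (\<lambda>k. (lam k)^2)"
    \<comment> \<open>(A6)\<close>
    and A6: "0 < \<alpha>lo" "\<forall>k. \<alpha>lo \<le> \<alpha> k \<and> \<alpha> k \<le> \<alpha>hi"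
            "0 < \<beta>lo" "\<forall>k. \<beta>lo \<le> \<beta> k \<and> \<beta> k \<le> \<beta>hi"
            "0 < \<gamma>lo" "\<forall>k. \<gamma>lo \<le> \<gamma> k \<and> \<gamma> k \<le> \<gamma>hi"
    \<comment> \<open>(A7')\<close>
    and A7: "0 \<le> \<epsilon>0" "phistar F C Q r - philb F C r \<le> \<epsilon>0"
    \<comment> \<open>(A8)\<close>
    and A8: "\<forall>k. norm (x k) \<le> B"
    \<comment> \<open>ABP algorithm\<close>
    and istar: "\<forall>k j. r j * (F (x k) $ j - zstar F C j)
                       \<le> r (istar k) * (F (x k) $ istar k - zstar F C (istar k))"
    and Delta_def: "\<forall>k. Delta k = phi F C r (x k) - philb F C r"
    and d_def: "\<forall>k. d k =
        (if Delta k \<ge> 0 then \<alpha> k else 0) *\<^sub>R (r (istar k) *\<^sub>R (J (x k) $ istar k))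
      + \<beta> k *\<^sub>R (x k - closest_point C (x k))
      + \<gamma> k *\<^sub>R (transpose (J (x k)) *v
                    (F (x k) - closest_point (closure (Qplus Q)) (F (x k))))"
    and step: "\<forall>k. x (Suc k) = x k - (lam k / max \<mu> (norm (d k))) *\<^sub>R d k"
    and Phi_def: "\<forall>k. Phi k = \<alpha> k * max (Delta k) 0 + \<beta> k * Hfun C (x k)
                              + \<gamma> k * Gfun F Q (x k)"
    \<comment> \<open>uniform bound on the directions\<close>
    and Mbar: "\<forall>k. norm (d k) \<le> Mbar"
  shows "\<exists>kj :: nat \<Rightarrow> nat. \<exists>ell.
           strict_mono kj \<and>
           0 \<le> ell \<and> ell \<le> (\<alpha>hi * max \<mu> Mbar / \<mu>) * \<epsilon>0 \<and>
           (\<lambda>j. Phi (kj j)) \<longlonglongrightarrow> ell \<and>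
           (\<forall>j. Hfun C (x (kj j)) \<le> Phi (kj j) / \<beta>lo) \<and>
           (\<lambda>j. Phi (kj j) / \<beta>lo) \<longlonglongrightarrow> ell / \<beta>lo \<and>
           ell / \<beta>lo \<le> (\<alpha>hi * max \<mu> Mbar / \<mu>) * \<epsilon>0 / \<beta>lo \<and>
           (\<forall>j. Gfun F Q (x (kj j)) \<le> Phi (kj j) / \<gamma>lo) \<and>
           (\<lambda>j. Phi (kj j) / \<gamma>lo) \<longlonglongrightarrow> ell / \<gamma>lo \<and>
           ell / \<gamma>lo \<le> (\<alpha>hi * max \<mu> Mbar / \<mu>) * \<epsilon>0 / \<gamma>lo \<and>
           (\<forall>j. max (Delta (kj j)) 0 \<le> Phi (kj j) / \<alpha>lo) \<and>
           (\<lambda>j. Phi (kj j) / \<alpha>lo) \<longlonglongrightarrow> ell / \<alpha>lo \<and>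
           ell / \<alpha>lo \<le> (\<alpha>hi * max \<mu> Mbar / \<mu>) * \<epsilon>0 / \<alpha>lo \<and>
           (\<epsilon>0 = 0 \<longrightarrow> ell = 0 \<and>
              (\<lambda>j. Hfun C (x (kj j))) \<longlonglongrightarrow> 0 \<and>
              (\<lambda>j. Gfun F Q (x (kj j))) \<longlonglongrightarrow> 0 \<and>
              (\<lambda>j. max (Delta (kj j)) 0) \<longlonglongrightarrow> 0)"
proof -
  obtain z where z: "z \<in> Omega F C Q r" using A4 by blast
  define c where "c = \<alpha>hi * \<epsilon>0"
  have lower: "\<alpha>lo \<le> \<alpha> k" "\<beta>lo \<le> \<beta> k" "\<gamma>lo \<le> \<gamma> k" for k
    using A6 by simp_all
  have weights: "0 \<le> \<alpha> k" "\<alpha> k \<le> \<alpha>hi" "0 \<le> \<beta> k" "0 \<le> \<gamma> k" for k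
    using A6 lower[of k] by (meson order.trans less_imp_le)+
  have HG_nonneg: "0 \<le> Hfun C y" "0 \<le> Gfun F Q y" for y
    by (simp_all add: Hfun_def Gfun_def)
  have merit: "0 \<le> Phi k" "max (Delta k) 0 \<le> Phi k / \<alpha>lo"
      "Hfun C (x k) \<le> Phi k / \<beta>lo" "Gfun F Q (x k) \<le> Phi k / \<gamma>lo" for k
    using weighted_sum_term_bounds[OF A6(1) lower(1) A6(3) lower(2) A6(5) lower(3) max.cobounded2 HG_nonneg]
    by (simp_all only: Phi_def[rule_format])
  have "\<forall>k. Phi k - c \<le> inner (d k) (x k - z)"
    using abp_direction_inner_ge[OF A1_deriv[rule_format] A3 A2_C A2_Q(1,3) z A7 weights
        spec[OF istar] less_imp_le[OF r_pos[rule_format]] Delta_def[rule_format] d_def[rule_format]]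
    by (simp add: Phi_def c_def)
  then have "\<exists>\<^sub>F k in sequentially. Phi k < c + \<epsilon>" if "0 < \<epsilon>" for \<epsilon>
    using frequently_less_of_normalized_steps[OF mu_pos A5 Mbar step _ that] by blast
  then obtain kj ell where kj: "strict_mono kj" "0 \<le> ell" "ell \<le> c" "(\<lambda>j. Phi (kj j)) \<longlonglongrightarrow> ell"
    using subseq_tendsto_le_of_frequently_less[of Phi c] merit(1) by blast
  have "c \<le> (\<alpha>hi * max \<mu> Mbar / \<mu>) * \<epsilon>0"
    using mu_pos A7(1) weights(1,2)[of 0] unfolding c_def
    by (intro mult_right_mono) (auto simp: le_divide_eq intro: mult_left_mono)
  with kj(3) have ell_le: "ell \<le> (\<alpha>hi * max \<mu> Mbar / \<mu>) * \<epsilon>0" by linarith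
  have "(\<lambda>j. Phi (kj j) / lo) \<longlonglongrightarrow> ell / lo" for lo :: real
    using tendsto_mult_right[OF kj(4), of "inverse lo"] by (simp add: divide_inverse)
  moreover have "ell / lo \<le> (\<alpha>hi * max \<mu> Mbar / \<mu>) * \<epsilon>0 / lo" if "0 < lo" for lo
    using divide_right_mono[OF ell_le] that by simp
  moreover have "ell = 0" and "(\<lambda>j. Phi (kj j)) \<longlonglongrightarrow> 0" if "\<epsilon>0 = 0"
    using ell_le kj(2,4) that by simp_all
  ultimately show ?thesis
    using kj ell_le merit A6(1,3,5) HG_nonneg
      tendsto_zero_of_le_divide[OF A6(3) HG_nonneg(1) merit(3)]
      tendsto_zero_of_le_divide[OF A6(5) HG_nonneg(2) merit(4)]
      tendsto_zero_of_le_divide[OF A6(1) max.cobounded2 merit(2)]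
    by (intro exI[of _ kj] exI[of _ ell]) simp
qed

end
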